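(* Let $X$ be a metrizable space and $A\subset X$. Then the discretization $X_A$ of $X$ by $A$ has a regular base at non-isolated points.
   Context: The discretization $X_A$ is the set $X$ with the topology generated by the base $\{U: U \text{ open in } X\}\cup\{\{x\}:x\in A\}$. A base $\mathcal{B}$ is regular at $x$ if for every neighborhood $U$ of $x$ there is an open $V$ with $x\in V\subset U$ such that $\{B\in\mathcal{B}: B\cap V\neq\emptyset,\ B\not\subset U\}$ is finite; a regular base at non-isolated points is regular at every non-isolated point. *)

theory Defs
  imports "HOL-Analysis.Analysis"
begin

definition discretization :: "'a topology \<Rightarrow> 'a set \<Rightarrow> 'a topology" where
  "discretization X A =
     topology_generated_by ({U. openin X U} \<union> {{x} | x. x \<in> A})"

definition is_base :: "'a topology \<Rightarrow> 'a set set \<Rightarrow> bool" where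
  "is_base T \<B> \<longleftrightarrow> (\<forall>B\<in>\<B>. openin T B) \<and>
     (\<forall>U. openin T U \<longrightarrow> (\<forall>x\<in>U. \<exists>B\<in>\<B>. x \<in> B \<and> B \<subseteq> U))"

definition regular_at :: "'a topology \<Rightarrow> 'a set set \<Rightarrow> 'a \<Rightarrow> bool" where
  "regular_at T \<B> x \<longleftrightarrow>
     (\<forall>U. (\<exists>W. openin T W \<and> x \<in> W \<and> W \<subseteq> U) \<longrightarrow>
        (\<exists>V. openin T V \<and> x \<in> V \<and> V \<subseteq> U \<and>
             finite {B\<in>\<B>. B \<inter> V \<noteq> {} \<and> \<not> B \<subseteq> U}))"

definition isolated_point :: "'a topology \<Rightarrow> 'a \<Rightarrow> bool" where
  "isolated_point T x \<longleftrightarrow> x \<in> topspace T \<and> openin T {x}"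

definition has_regular_base_at_nonisolated :: "'a topology \<Rightarrow> bool" where
  "has_regular_base_at_nonisolated T \<longleftrightarrow>
     (\<exists>\<B>. is_base T \<B> \<and>
        (\<forall>x\<in>topspace T. \<not> isolated_point T x \<longrightarrow> regular_at T \<B> x))"

end

theory Submission
  imports Defs
begin

text \<open>
  Let X be metrizable with metric d on M, and A a subset of M. The proof follows the
  classical construction of a regular base from a sequence of locally finite open covers.

  (1) X-open sets and singletons of points of A are open in the discretization X_A, and
      every X_A-open set is an X-neighbourhood of each of its points outside A.
  (2) Stone's theorem in the form needed here: for every radius r > 0 the metric space has a
      locally finite open cover by sets contained in balls of radius r. This is proved by
      M. E. Rudin's explicit construction from a well-ordering of M.
  (3) Choosing such covers F m of mesh (1/2)^m, the family of all their members together with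
      the singletons of points of A is a base of X_A. At a non-isolated point x (that is, a
      point outside A) it is regular: a small neighbourhood V of x meets only members of F k
      that lie inside a given neighbourhood U when k is large, and for the finitely many small
      k only finitely many members of F k meet V, by local finiteness.
\<close>

section \<open>The discretization of a topology\<close>

lemma topspace_discretization:
  assumes "A \<subseteq> topspace X"
  shows "topspace (discretization X A) = topspace X"
  using assms unfolding discretization_def by (auto dest: openin_subset)

lemma openin_discretization_open: "openin X W \<Longrightarrow> openin (discretization X A) W"
  unfolding discretization_def by (intro topology_generated_by_Basis) auto

lemma openin_discretization_singleton: "a \<in> A \<Longrightarrow> openin (discretization X A) {a}"
  unfolding discretization_def by (intro topology_generated_by_Basis) auto

lemma discretization_open_nbhd:
  assumes "openin (discretization X A) S" "x \<in> S" "x \<notin> A"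
  shows "\<exists>W. openin X W \<and> x \<in> W \<and> W \<subseteq> S"
proof -
  have "generate_topology_on ({U. openin X U} \<union> {{x} | x. x \<in> A}) S"
    using assms(1) unfolding discretization_def by (rule openin_topology_generated_by)
  then have "\<forall>x\<in>S. x \<in> A \<or> (\<exists>W. openin X W \<and> x \<in> W \<and> W \<subseteq> S)"
  proof induction
    case Empty
    then show ?case by simp
  next
    case (Int a b)
    show ?case
    proof
      fix x assume x: "x \<in> a \<inter> b"
      show "x \<in> A \<or> (\<exists>W. openin X W \<and> x \<in> W \<and> W \<subseteq> a \<inter> b)"
      proof (cases "x \<in> A")
        case False
        have "x \<in> A \<or> (\<exists>W. openin X W \<and> x \<in> W \<and> W \<subseteq> a)" using Int.IH(1) x by blast
        then obtain W1 where W1: "openin X W1" "x \<in> W1" "W1 \<subseteq> a" using False by blast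
        have "x \<in> A \<or> (\<exists>W. openin X W \<and> x \<in> W \<and> W \<subseteq> b)" using Int.IH(2) x by blast
        then obtain W2 where W2: "openin X W2" "x \<in> W2" "W2 \<subseteq> b" using False by blast
        have "openin X (W1 \<inter> W2)" using W1(1) W2(1) by (rule openin_Int)
        then show ?thesis using W1 W2 by blast
      qed (rule disjI1)
    qed
  next
    case (UN K)
    show ?case
    proof
      fix x assume "x \<in> \<Union>K"
      then obtain k where k: "k \<in> K" "x \<in> k" by blast
      then have "x \<in> A \<or> (\<exists>W. openin X W \<and> x \<in> W \<and> W \<subseteq> k)" using UN.IH by blast
      then show "x \<in> A \<or> (\<exists>W. openin X W \<and> x \<in> W \<and> W \<subseteq> \<Union>K)" using k by blast
    qed
  next
    case (Basis s)
    then have "openin X s \<or> (\<exists>a. s = {a} \<and> a \<in> A)" by blast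
    then show ?case by blast
  qed
  then show ?thesis using assms(2,3) by blast
qed

definition dyadic :: "nat \<Rightarrow> real" where
  "dyadic n = (1/2) ^ n"

lemma dyadic_pos: "0 < dyadic n"
  by (simp add: dyadic_def)

lemma dyadic_Suc: "dyadic (Suc n) = dyadic n / 2"
  by (simp add: dyadic_def)

lemma dyadic_antimono: "m \<le> n \<Longrightarrow> dyadic n \<le> dyadic m"
  unfolding dyadic_def by (simp add: power_decreasing)

lemma dyadic_small: "0 < r \<Longrightarrow> \<exists>n. dyadic n < r"
  unfolding dyadic_def by (rule real_arch_pow_inv) auto

section \<open>Locally finite covers of metric spaces\<close>

definition (in Metric_space) locally_finite_cover :: "real \<Rightarrow> 'a set set \<Rightarrow> bool" where
  "locally_finite_cover r \<W> \<longleftrightarrow>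
     (\<forall>W\<in>\<W>. openin mtopology W \<and> (\<exists>p\<in>M. W \<subseteq> mball p r)) \<and> M \<subseteq> \<Union>\<W> \<and>
     (\<forall>x\<in>M. \<exists>N. openin mtopology N \<and> x \<in> N \<and> finite {W\<in>\<W>. W \<inter> N \<noteq> {}})"

text \<open>Every type carries a well-founded strict total order (by the well-ordering theorem);
  it is used to assign each point to the least ball of radius \<open>\<epsilon>\<close> containing it.\<close>

lemma wf_total_order_exists:
  obtains R :: "'a rel" where "wf R" "\<And>p q. p \<noteq> q \<Longrightarrow> (p, q) \<in> R \<or> (q, p) \<in> R"
proof -
  obtain r :: "'a rel" where wo: "Well_order r" and univ: "Field r = UNIV"
    using well_ordering [where 'a = "'a"] by blast
  have "wf (r - Id)" using wo by (simp add: order_on_defs)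
  moreover have "(p, q) \<in> r - Id \<or> (q, p) \<in> r - Id" if "p \<noteq> q" for p q
    using wo univ that by (auto simp: order_on_defs total_on_def)
  ultimately show thesis by (rule that)
qed

lemma finite_subsingleton: "(\<And>a b. a \<in> S \<Longrightarrow> b \<in> S \<Longrightarrow> a = b) \<Longrightarrow> finite S"
  by (metis finite.simps is_singletonI' is_singleton_def)

text \<open>Rudin's construction.\<close>

locale Stone_construction = Metric_space +
  fixes R :: "'a rel" and \<epsilon> :: real
  assumes wf_R: "wf R"
    and total_R: "p \<noteq> q \<Longrightarrow> (p, q) \<in> R \<or> (q, p) \<in> R"
    and eps_pos: "0 < \<epsilon>"
begin

definition owner :: "'a \<Rightarrow> 'a \<Rightarrow> bool" where
  "owner p c \<longleftrightarrow> c \<in> mball p \<epsilon> \<and> (\<forall>q. (q, p) \<in> R \<longrightarrow> c \<notin> mball q \<epsilon>)"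

definition centres :: "nat \<Rightarrow> 'a \<Rightarrow> 'a set \<Rightarrow> 'a set" where
  "centres n p S = {c. owner p c \<and> c \<notin> S \<and> mball c (3 * dyadic n) \<subseteq> mball p \<epsilon>}"

primrec covered :: "nat \<Rightarrow> 'a set" where
  "covered 0 = {}"
| "covered (Suc n) = covered n \<union> (\<Union>p. \<Union>c\<in>centres n p (covered n). mball c (dyadic n))"

definition cell :: "nat \<Rightarrow> 'a \<Rightarrow> 'a set" where
  "cell n p = (\<Union>c\<in>centres n p (covered n). mball c (dyadic n))"

definition cells :: "'a set set" where
  "cells = {cell n p | n p. p \<in> M}"

lemma owner_exists:
  assumes "c \<in> M"
  shows "\<exists>p. owner p c"
proof -
  have "c \<in> {p. c \<in> mball p \<epsilon>}" using assms eps_pos by simp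
  then obtain p where "p \<in> {p. c \<in> mball p \<epsilon>}" "\<And>q. (q, p) \<in> R \<Longrightarrow> q \<notin> {p. c \<in> mball p \<epsilon>}"
    by (rule wfE_min[OF wf_R]) blast
  then have "owner p c" unfolding owner_def by simp
  then show ?thesis ..
qed

lemma mem_cellE:
  assumes "y \<in> cell n p"
  obtains c where "owner p c" "c \<notin> covered n" "mball c (3 * dyadic n) \<subseteq> mball p \<epsilon>"
    "y \<in> mball c (dyadic n)"
  using assms unfolding cell_def centres_def by blast

lemma covered_Suc: "covered (Suc n) = covered n \<union> (\<Union>p. cell n p)"
  by (simp add: cell_def)

lemma covered_eq: "covered n = (\<Union>j<n. \<Union>p. cell j p)"
proof (induction n)
  case 0
  then show ?case by simp
next
  case (Suc n)
  have "covered (Suc n) = (\<Union>j<n. \<Union>p. cell j p) \<union> (\<Union>p. cell n p)"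
    by (simp only: covered_Suc Suc.IH)
  also have "\<dots> = (\<Union>j<Suc n. \<Union>p. cell j p)"
    by (simp add: lessThan_Suc Un_commute)
  finally show ?case .
qed

lemma cell_subset_covered: "j < i \<Longrightarrow> cell j q \<subseteq> covered i"
  unfolding covered_eq[of i] by blast

lemma openin_cell: "openin mtopology (cell n p)"
  unfolding cell_def by (rule openin_Union) auto

lemma cell_subset_ball: "cell n p \<subseteq> mball p \<epsilon>"
proof
  fix y assume "y \<in> cell n p"
  then obtain c where "owner p c" "c \<notin> covered n"
    and c: "mball c (3 * dyadic n) \<subseteq> mball p \<epsilon>" "y \<in> mball c (dyadic n)"
    by (rule mem_cellE)
  then have "y \<in> mball c (3 * dyadic n)" using dyadic_pos[of n] by auto
  then show "y \<in> mball p \<epsilon>" using c(1) by blast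
qed

text \<open>Every point lies in some cell: either it is covered before the stage n at which the
  ball of radius 3(1/2)^n around it fits into the \<open>\<epsilon>\<close>-ball of its owner, or it is a centre
  at stage n.\<close>

lemma cells_cover:
  assumes x: "x \<in> M"
  shows "\<exists>n p. x \<in> cell n p"
proof -
  obtain p where p: "owner p x" using owner_exists[OF x] by blast
  then have pM: "p \<in> M" and px: "d p x < \<epsilon>" unfolding owner_def by auto
  obtain n where n: "dyadic n < (\<epsilon> - d p x) / 3" using dyadic_small[of "(\<epsilon> - d p x) / 3"] px by auto
  have fits: "mball x (3 * dyadic n) \<subseteq> mball p \<epsilon>"
  proof
    fix y assume "y \<in> mball x (3 * dyadic n)"
    then have "y \<in> M" "d x y < 3 * dyadic n" by auto
    moreover have "d p y \<le> d p x + d x y" using triangle[of p x y] pM x \<open>y \<in> M\<close> by simp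
    ultimately show "y \<in> mball p \<epsilon>" using pM n by auto
  qed
  show ?thesis
  proof (cases "x \<in> covered n")
    case True
    then show ?thesis unfolding covered_eq[of n] by blast
  next
    case False
    then have "x \<in> centres n p (covered n)" using p fits unfolding centres_def by blast
    moreover have "x \<in> mball x (dyadic n)" using x dyadic_pos[of n] by simp
    ultimately show ?thesis unfolding cell_def by blast
  qed
qed

text \<open>A cell of stage i only contains points within (1/2)^i of a centre outside the region
  covered before stage i.\<close>

lemma cell_far_from_covered:
  assumes "mball x \<rho> \<subseteq> covered i" "x \<in> M" "y \<in> cell i q"
  shows "\<rho> < d x y + dyadic i"
proof -
  obtain c where c: "c \<notin> covered i" "y \<in> mball c (dyadic i)"
    using assms(3) by (blast elim: mem_cellE)
  have cM: "c \<in> M" "y \<in> M" using c(2) by auto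
  have "c \<notin> mball x \<rho>" using c(1) assms(1) by blast
  then have "\<rho> \<le> d x c" using assms(2) cM by auto
  moreover have "d x c \<le> d x y + d y c" using triangle[of x y c] assms(2) cM by simp
  moreover have "d y c < dyadic i" using c(2) commute[of y c] by simp
  ultimately show ?thesis by linarith
qed

text \<open>Cells of the same stage belonging to different points are (1/2)^i apart: a centre of
  the R-later point lies outside the \<open>\<epsilon>\<close>-ball of the earlier one, hence at distance at least
  3(1/2)^i from every centre of the earlier point.\<close>

lemma same_stage_cells_apart:
  assumes "y1 \<in> cell i p1" "y2 \<in> cell i p2" "(p1, p2) \<in> R"
  shows "dyadic i \<le> d y1 y2"
proof -
  obtain c1 where "owner p1 c1" "c1 \<notin> covered i"
    and c1: "mball c1 (3 * dyadic i) \<subseteq> mball p1 \<epsilon>" "y1 \<in> mball c1 (dyadic i)"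
    using assms(1) by (rule mem_cellE)
  obtain c2 where c2: "owner p2 c2" "y2 \<in> mball c2 (dyadic i)"
    using assms(2) by (blast elim: mem_cellE)
  have M: "c1 \<in> M" "c2 \<in> M" "y1 \<in> M" "y2 \<in> M" using c1 c2 by auto
  have "c2 \<notin> mball p1 \<epsilon>" using c2(1) assms(3) unfolding owner_def by blast
  then have "c2 \<notin> mball c1 (3 * dyadic i)" using c1(1) by blast
  then have "3 * dyadic i \<le> d c1 c2" using M by auto
  moreover have "d c1 c2 \<le> d c1 y1 + d y1 y2 + d y2 c2"
    using triangle[of c1 y1 c2] triangle[of y1 y2 c2] M by linarith
  moreover have "d c1 y1 < dyadic i" using c1(2) by simp
  moreover have "d y2 c2 < dyadic i" using c2(2) commute[of y2 c2] by simp
  ultimately show ?thesis by linarith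
qed

lemma same_stage_cells_close:
  assumes "y1 \<in> cell i p1" "y2 \<in> cell i p2" "d y1 y2 < dyadic i"
  shows "p1 = p2"
proof (rule ccontr)
  assume "p1 \<noteq> p2"
  then consider "(p1, p2) \<in> R" | "(p2, p1) \<in> R" using total_R by blast
  then show False
  proof cases
    case 1
    then show False using same_stage_cells_apart[OF assms(1,2)] assms(3) by linarith
  next
    case 2
    then show False using same_stage_cells_apart[OF assms(2,1)] assms(3) commute[of y1 y2]
      by linarith
  qed
qed

text \<open>Local finiteness: if the ball of radius \<open>\<rho>\<close> about x lies in a cell of stage n and
  (1/2)^k < \<open>\<rho>\<close>, then the ball N of radius (1/2)^(n+k+1) meets no cell of a later stage
  than n + k, and at most one cell of each earlier stage.\<close>

lemma cells_locally_finite: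
  assumes x: "x \<in> M"
  shows "\<exists>N. openin mtopology N \<and> x \<in> N \<and> finite {W\<in>cells. W \<inter> N \<noteq> {}}"
proof -
  obtain n p where "x \<in> cell n p" using cells_cover[OF x] by blast
  then obtain \<rho> where \<rho>: "0 < \<rho>" "mball x \<rho> \<subseteq> cell n p"
    using openin_cell[of n p] unfolding openin_mtopology by blast
  obtain k where k: "dyadic k < \<rho>" using dyadic_small[OF \<rho>(1)] by blast
  define N where "N = mball x (dyadic (Suc (n + k)))"
  have halves: "2 * dyadic (Suc (n + k)) \<le> dyadic i" if "i \<le> n + k" for i
    using dyadic_Suc[of "n + k"] dyadic_antimono[OF that] by simp
  have stage_bound: "i \<le> n + k" if "y \<in> cell i q" "y \<in> N" for i q y
  proof (rule ccontr)
    assume late: "\<not> i \<le> n + k"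
    then have "mball x \<rho> \<subseteq> covered i" using \<rho>(2) cell_subset_covered[of n i p] by auto
    then have "\<rho> < d x y + dyadic i" using cell_far_from_covered x that(1) by blast
    moreover have "d x y < dyadic (Suc (n + k))" using that(2) unfolding N_def by simp
    moreover have "dyadic i \<le> dyadic (Suc (n + k))" using late by (intro dyadic_antimono) simp
    moreover have "2 * dyadic (Suc (n + k)) \<le> dyadic k" using halves[of k] by simp
    ultimately show False using k by linarith
  qed
  have one_per_stage: "finite {cell i q | q. cell i q \<inter> N \<noteq> {}}" if i: "i \<le> n + k" for i
  proof (rule finite_subsingleton)
    fix a b assume "a \<in> {cell i q | q. cell i q \<inter> N \<noteq> {}}" "b \<in> {cell i q | q. cell i q \<inter> N \<noteq> {}}"
    then obtain q1 q2 y1 y2 where ab: "a = cell i q1" "b = cell i q2"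
      and y1: "y1 \<in> cell i q1" "y1 \<in> N" and y2: "y2 \<in> cell i q2" "y2 \<in> N"
      by blast
    have yM: "y1 \<in> M" "y2 \<in> M" using y1(2) y2(2) unfolding N_def by auto
    have "d y1 y2 \<le> d x y1 + d x y2" using triangle[of y1 x y2] commute[of y1 x] x yM by simp
    moreover have "d x y1 < dyadic (Suc (n + k))" "d x y2 < dyadic (Suc (n + k))"
      using y1(2) y2(2) unfolding N_def by auto
    ultimately have "d y1 y2 < dyadic i" using halves[OF i] by linarith
    then have "q1 = q2" using same_stage_cells_close y1(1) y2(1) by blast
    then show "a = b" using ab by simp
  qed
  have "{W\<in>cells. W \<inter> N \<noteq> {}} \<subseteq> (\<Union>i\<in>{..n + k}. {cell i q | q. cell i q \<inter> N \<noteq> {}})"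
    unfolding cells_def using stage_bound by fastforce
  moreover have "finite (\<Union>i\<in>{..n + k}. {cell i q | q. cell i q \<inter> N \<noteq> {}})"
    using one_per_stage by (intro finite_UN_I) auto
  ultimately have "finite {W\<in>cells. W \<inter> N \<noteq> {}}" by (rule finite_subset)
  moreover have "x \<in> N" using x dyadic_pos unfolding N_def by simp
  ultimately show ?thesis unfolding N_def by blast
qed

lemma cells_locally_finite_cover: "locally_finite_cover \<epsilon> cells"
  unfolding locally_finite_cover_def
proof (intro conjI)
  show "\<forall>W\<in>cells. openin mtopology W \<and> (\<exists>p\<in>M. W \<subseteq> mball p \<epsilon>)"
    unfolding cells_def using openin_cell cell_subset_ball by blast
  show "M \<subseteq> \<Union>cells"
  proof
    fix x assume "x \<in> M"
    then obtain n p where xc: "x \<in> cell n p" using cells_cover by blast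
    then have "p \<in> M" using cell_subset_ball[of n p] by auto
    then show "x \<in> \<Union>cells" using xc unfolding cells_def by blast
  qed
  show "\<forall>x\<in>M. \<exists>N. openin mtopology N \<and> x \<in> N \<and> finite {W\<in>cells. W \<inter> N \<noteq> {}}"
    using cells_locally_finite by blast
qed

end

lemma (in Metric_space) locally_finite_cover_exists:
  assumes "0 < \<epsilon>"
  shows "\<exists>\<W>. locally_finite_cover \<epsilon> \<W>"
proof -
  obtain R :: "'a rel" where R: "wf R" "\<And>p q. p \<noteq> q \<Longrightarrow> (p, q) \<in> R \<or> (q, p) \<in> R"
    using wf_total_order_exists by metis
  interpret Stone_construction M d R \<epsilon>
    by (intro Stone_construction.intro Metric_space_axioms Stone_construction_axioms.intro R assms)
  show ?thesis using cells_locally_finite_cover by blast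
qed

lemma (in Metric_space) locally_finite_cover_member_small:
  assumes "locally_finite_cover r \<W>" "W \<in> \<W>" "y \<in> W" "x \<in> M" "d x y + 2 * r \<le> s"
  shows "W \<subseteq> mball x s"
proof
  fix z assume z: "z \<in> W"
  obtain p where p: "p \<in> M" "W \<subseteq> mball p r"
    using assms(1,2) unfolding locally_finite_cover_def by blast
  then have yz: "y \<in> M" "z \<in> M" "d p y < r" "d p z < r" using assms(3) z by auto
  have "d x z \<le> d x y + d y p + d p z"
    using triangle[of x y z] triangle[of y p z] p(1) yz(1,2) assms(4) by linarith
  then have "d x z < s" using yz(3,4) commute[of y p] assms(5) by linarith
  then show "z \<in> mball x s" using assms(4) yz(2) by simp
qed

lemma (in Metric_space) finitely_many_covers_locally_finite:
  fixes m :: nat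
  assumes F: "\<And>k. k < m \<Longrightarrow> locally_finite_cover (r k) (F k)" and x: "x \<in> M" and "0 < s"
  obtains V where "openin mtopology V" "x \<in> V" "V \<subseteq> mball x s"
    "finite {B \<in> (\<Union>k<m. F k). B \<inter> V \<noteq> {}}"
proof -
  have "\<forall>k\<in>{..<m}. \<exists>N. openin mtopology N \<and> x \<in> N \<and> finite {B\<in>F k. B \<inter> N \<noteq> {}}"
    using F x unfolding locally_finite_cover_def by blast
  then obtain N where N: "\<forall>k\<in>{..<m}. openin mtopology (N k) \<and> x \<in> N k \<and> finite {B\<in>F k. B \<inter> N k \<noteq> {}}"
    by (rule bchoice[THEN exE])
  define V where "V = mball x s \<inter> \<Inter>(N ` {..<m})"
  have "openin mtopology V" unfolding V_def by (rule openin_Int_Inter) (use N in auto)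
  moreover have "x \<in> V" unfolding V_def using x \<open>0 < s\<close> N by auto
  moreover have "V \<subseteq> mball x s" unfolding V_def by blast
  moreover have "{B \<in> (\<Union>k<m. F k). B \<inter> V \<noteq> {}} \<subseteq> (\<Union>k<m. {B\<in>F k. B \<inter> N k \<noteq> {}})"
    unfolding V_def by blast
  then have "finite {B \<in> (\<Union>k<m. F k). B \<inter> V \<noteq> {}}"
    by (rule finite_subset) (use N in blast)
  ultimately show thesis by (rule that)
qed

section \<open>The regular base of a discretized metric space\<close>

lemma (in Metric_space) discretization_is_base:
  assumes F: "\<And>m. locally_finite_cover (dyadic m) (F m)"
  shows "is_base (discretization mtopology A) ((\<Union>m. F m) \<union> {{a} | a. a \<in> A})"
  unfolding is_base_def
proof (intro conjI allI impI ballI)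
  fix B assume "B \<in> (\<Union>m. F m) \<union> {{a} | a. a \<in> A}"
  then show "openin (discretization mtopology A) B"
  proof
    assume "B \<in> (\<Union>m. F m)"
    then have "openin mtopology B" using F unfolding locally_finite_cover_def by blast
    then show ?thesis by (rule openin_discretization_open)
  next
    assume "B \<in> {{a} | a. a \<in> A}"
    then obtain a where "a \<in> A" "B = {a}" by blast
    then show ?thesis using openin_discretization_singleton[of a A mtopology] by simp
  qed
next
  fix U x assume U: "openin (discretization mtopology A) U" and xU: "x \<in> U"
  show "\<exists>B\<in>(\<Union>m. F m) \<union> {{a} | a. a \<in> A}. x \<in> B \<and> B \<subseteq> U"
  proof (cases "x \<in> A")
    case True
    then show ?thesis using xU by blast
  next
    case False
    then obtain W where W: "openin mtopology W" "x \<in> W" "W \<subseteq> U"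
      using discretization_open_nbhd[OF U xU] by blast
    obtain r where r: "0 < r" "mball x r \<subseteq> W" using W unfolding openin_mtopology by blast
    obtain m where m: "dyadic m < r / 2" using dyadic_small[of "r / 2"] r(1) by auto
    have xM: "x \<in> M" using W(1,2) openin_subset by fastforce
    obtain B where B: "B \<in> F m" "x \<in> B" using F[of m] xM unfolding locally_finite_cover_def by blast
    have "d x x + 2 * dyadic m \<le> r" using xM m by simp
    then have "B \<subseteq> mball x r" by (rule locally_finite_cover_member_small[OF F B xM])
    then show ?thesis using B r(2) W(3) by blast
  qed
qed

text \<open>Regularity at a point x outside A: given a neighbourhood U, pick a ball of radius r about
  x inside U and m with 3(1/2)^m < r. Members of F k with k \<ge> m meeting the ball of radius
  (1/2)^m lie inside U, so only the finitely many members of F 0, ..., F (m-1) meeting a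
  suitable neighbourhood V of x remain.\<close>

lemma (in Metric_space) discretization_regular_at:
  assumes F: "\<And>m. locally_finite_cover (dyadic m) (F m)" and x: "x \<in> M" "x \<notin> A"
  shows "regular_at (discretization mtopology A) ((\<Union>m. F m) \<union> {{a} | a. a \<in> A}) x"
  unfolding regular_at_def
proof (intro allI impI)
  let ?B = "(\<Union>m. F m) \<union> {{a} | a. a \<in> A}"
  fix U assume "\<exists>W. openin (discretization mtopology A) W \<and> x \<in> W \<and> W \<subseteq> U"
  then obtain W where W: "openin (discretization mtopology A) W" "x \<in> W" "W \<subseteq> U" by blast
  obtain W' where W': "openin mtopology W'" "x \<in> W'" "W' \<subseteq> W"
    using discretization_open_nbhd[OF W(1,2) x(2)] by blast
  obtain r where r: "0 < r" "mball x r \<subseteq> W'" using W'(1,2) unfolding openin_mtopology by blast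
  obtain m where m: "dyadic m < r / 3" using dyadic_small[of "r / 3"] r(1) by auto
  have early_covers: "\<And>k. k < m \<Longrightarrow> locally_finite_cover (dyadic k) (F k)" by (rule F)
  obtain V where V: "openin mtopology V" "x \<in> V" "V \<subseteq> mball x (dyadic m)"
      and fin: "finite {B \<in> (\<Union>k<m. F k). B \<inter> V \<noteq> {}}"
    by (rule finitely_many_covers_locally_finite[OF early_covers x(1) dyadic_pos])
  have "mball x (dyadic m) \<subseteq> mball x r" using m r(1) by auto
  then have VU: "V \<subseteq> U" using V(3) r(2) W'(3) W(3) by blast
  have "{B\<in>?B. B \<inter> V \<noteq> {} \<and> \<not> B \<subseteq> U} \<subseteq> {B \<in> (\<Union>k<m. F k). B \<inter> V \<noteq> {}}"
  proof
    fix B assume "B \<in> {B\<in>?B. B \<inter> V \<noteq> {} \<and> \<not> B \<subseteq> U}"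
    then have B: "B \<in> ?B" "B \<inter> V \<noteq> {}" "\<not> B \<subseteq> U" by auto
    then obtain y where y: "y \<in> B" "y \<in> V" by blast
    have "B \<notin> {{a} | a. a \<in> A}"
    proof
      assume "B \<in> {{a} | a. a \<in> A}"
      then have "B \<subseteq> V" using y by blast
      then show False using VU B(3) by blast
    qed
    then obtain k where k: "B \<in> F k" using B(1) by blast
    have "k < m"
    proof (rule ccontr)
      assume "\<not> k < m"
      then have "dyadic k \<le> dyadic m" by (intro dyadic_antimono) simp
      moreover have "d x y < dyadic m" using y(2) V(3) by auto
      ultimately have "d x y + 2 * dyadic k \<le> r" using m by linarith
      then have "B \<subseteq> mball x r" by (rule locally_finite_cover_member_small[OF F k y(1) x(1)])
      then show False using r(2) W'(3) W(3) B(3) by blast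
    qed
    then show "B \<in> {B \<in> (\<Union>k<m. F k). B \<inter> V \<noteq> {}}" using k B(2) by blast
  qed
  then have "finite {B\<in>?B. B \<inter> V \<noteq> {} \<and> \<not> B \<subseteq> U}" using fin by (rule finite_subset)
  then show "\<exists>V. openin (discretization mtopology A) V \<and> x \<in> V \<and> V \<subseteq> U \<and>
      finite {B\<in>?B. B \<inter> V \<noteq> {} \<and> \<not> B \<subseteq> U}"
    using openin_discretization_open[OF V(1)] V(2) VU by blast
qed

text \<open>The theorem for a metric space: non-isolated points of the discretization are
  exactly the points outside A, where the base above is regular.\<close>

lemma (in Metric_space) discretization_has_regular_base:
  assumes A: "A \<subseteq> M"
  shows "has_regular_base_at_nonisolated (discretization mtopology A)"
proof -
  have "\<forall>m. \<exists>\<W>. locally_finite_cover (dyadic m) \<W>"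
    using locally_finite_cover_exists dyadic_pos by blast
  then obtain F where "\<forall>m. locally_finite_cover (dyadic m) (F m)" by (rule choice[THEN exE])
  then have F: "\<And>m. locally_finite_cover (dyadic m) (F m)" by blast
  have topspace: "topspace (discretization mtopology A) = M"
    using topspace_discretization[of A mtopology] A by simp
  have "x \<notin> A" if "\<not> isolated_point (discretization mtopology A) x" "x \<in> M" for x
  proof
    assume "x \<in> A"
    then have "openin (discretization mtopology A) {x}" by (rule openin_discretization_singleton)
    then show False using that topspace unfolding isolated_point_def by simp
  qed
  then show ?thesis unfolding has_regular_base_at_nonisolated_def topspace
    using discretization_is_base[OF F] discretization_regular_at[OF F] by blast
qed

theorem mainTheorem12:
  fixes X :: "'a topology" and A :: "'a set"
  assumes "metrizable_space X"
    and "A \<subseteq> topspace X"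
  shows "has_regular_base_at_nonisolated (discretization X A)"
proof -
  obtain M d where Md: "Metric_space M d" and X: "X = Metric_space.mtopology M d"
    using assms(1) unfolding metrizable_space_def by blast
  have "A \<subseteq> M" using assms(2) X Metric_space.topspace_mtopology[OF Md] by simp
  then show ?thesis using Metric_space.discretization_has_regular_base[OF Md] X by simp
qed

end
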